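(* Let $k\ge 3$ and $n_1=\cdots=n_k\ge 2$. The number of distinct isomorphism classes of graphs in the LC orbit $\mathcal{O}(K_{n_1,\dots,n_k})$ is $\lfloor k/2\rfloor+k+1$.
   Context: $K_{n_1,\dots,n_k}$ is the complete $k$-partite graph with parts of sizes $n_1,\dots,n_k$. The local complement $c_v(G)$ complements the edges among the neighbours of $v$; $\mathcal{O}(G)$ is the set of all graphs on the labelled vertex set $V(G)$ obtainable from $G$ by finite sequences of local complements. *)

theory Defs
  imports Main
begin

text \<open>Simple graphs on a labelled vertex set V are given by a symmetric, irreflexive
edge predicate E that only relates vertices of V.\<close>

definition local_comp :: "('a \<Rightarrow> 'a \<Rightarrow> bool) \<Rightarrow> 'a \<Rightarrow> ('a \<Rightarrow> 'a \<Rightarrow> bool)" where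
  "local_comp E v = (\<lambda>x y. if x \<noteq> y \<and> E v x \<and> E v y then \<not> E x y else E x y)"

inductive_set lc_orbit :: "'a set \<Rightarrow> ('a \<Rightarrow> 'a \<Rightarrow> bool) \<Rightarrow> ('a \<Rightarrow> 'a \<Rightarrow> bool) set"
  for V G where
  base: "G \<in> lc_orbit V G"
| step: "H \<in> lc_orbit V G \<Longrightarrow> v \<in> V \<Longrightarrow> local_comp H v \<in> lc_orbit V G"

definition graph_iso :: "'a set \<Rightarrow> ('a \<Rightarrow> 'a \<Rightarrow> bool) \<Rightarrow> ('a \<Rightarrow> 'a \<Rightarrow> bool) \<Rightarrow> bool" where
  "graph_iso V E F \<longleftrightarrow> (\<exists>f. bij_betw f V V \<and> (\<forall>x\<in>V. \<forall>y\<in>V. E x y \<longleftrightarrow> F (f x) (f y)))"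

definition kpart_verts :: "nat \<Rightarrow> nat \<Rightarrow> (nat \<times> nat) set" where
  "kpart_verts k n = {0..<k} \<times> {0..<n}"

definition complete_kpartite :: "nat \<Rightarrow> nat \<Rightarrow> (nat \<times> nat) \<Rightarrow> (nat \<times> nat) \<Rightarrow> bool" where
  "complete_kpartite k n = (\<lambda>x y. x \<in> kpart_verts k n \<and> y \<in> kpart_verts k n \<and> fst x \<noteq> fst y)"

definition num_iso_classes :: "'a set \<Rightarrow> ('a \<Rightarrow> 'a \<Rightarrow> bool) set \<Rightarrow> nat" where
  "num_iso_classes V S = card (S // {(E, F). E \<in> S \<and> F \<in> S \<and> graph_iso V E F})"

end

theory Submission
  imports Defs "HOL-Combinatorics.Permutations"
begin

(* Local complementation never destroys the block structure of K_{n,...,n}: every graph in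
   the orbit is a normal form in which the graph on the k parts is complete or a star, and
   each part is independent, a clique, or a star inside the part whose centre alone has
   neighbours outside.  Reachable normal forms obey a parity constraint between the shape of
   the part graph, the kinds of the parts and the number s of star parts.  Two normal forms
   are isomorphic iff they agree on the shape and on s, and both are graph invariants:
   the leaves are the s(n-1) non-centres of star parts, and the part graph is a star iff some
   two non-adjacent non-leaves are not twins.  The complete shape occurs exactly for even
   s <= k and the star shape exactly for s < k, giving k div 2 + 1 + k classes. *)

section \<open>Isomorphism invariants\<close>

definition is_leaf :: "'a set \<Rightarrow> ('a \<Rightarrow> 'a \<Rightarrow> bool) \<Rightarrow> 'a \<Rightarrow> bool" where
  "is_leaf V E x \<longleftrightarrow> (\<exists>z\<in>V. E x z \<and> (\<forall>w\<in>V. E x w \<longrightarrow> w = z))"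

definition leaves :: "'a set \<Rightarrow> ('a \<Rightarrow> 'a \<Rightarrow> bool) \<Rightarrow> 'a set" where
  "leaves V E = {x \<in> V. is_leaf V E x}"

definition has_nonadjacent_nontwins :: "'a set \<Rightarrow> ('a \<Rightarrow> 'a \<Rightarrow> bool) \<Rightarrow> bool" where
  "has_nonadjacent_nontwins V E \<longleftrightarrow> (\<exists>x\<in>V. \<exists>y\<in>V. x \<noteq> y \<and> \<not> E x y \<and>
     \<not> is_leaf V E x \<and> \<not> is_leaf V E y \<and> (\<exists>w\<in>V. E x w \<noteq> E y w))"

definition iso_signature :: "'a set \<Rightarrow> ('a \<Rightarrow> 'a \<Rightarrow> bool) \<Rightarrow> bool \<times> nat" where
  "iso_signature V E = (has_nonadjacent_nontwins V E, card (leaves V E))"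

lemma not_leaf_if_two_neighbours:
  "y \<in> V \<Longrightarrow> z \<in> V \<Longrightarrow> y \<noteq> z \<Longrightarrow> E x y \<Longrightarrow> E x z \<Longrightarrow> \<not> is_leaf V E x"
  unfolding is_leaf_def by metis

context
  fixes f :: "'a \<Rightarrow> 'a" and V :: "'a set" and E F :: "'a \<Rightarrow> 'a \<Rightarrow> bool"
  assumes bij: "bij_betw f V V"
    and edges: "\<forall>x\<in>V. \<forall>y\<in>V. E x y \<longleftrightarrow> F (f x) (f y)"
begin

private lemma image_eq: "f ` V = V"
  using bij by (simp add: bij_betw_def)

private lemma inj_iff: "x \<in> V \<Longrightarrow> y \<in> V \<Longrightarrow> f x = f y \<longleftrightarrow> x = y"
  using bij by (auto simp: bij_betw_def dest: inj_onD)

private lemma edge_iff: "x \<in> V \<Longrightarrow> y \<in> V \<Longrightarrow> F (f x) (f y) \<longleftrightarrow> E x y"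
  using edges by blast

lemma is_leaf_iso_iff:
  assumes "x \<in> V"
  shows "is_leaf V F (f x) \<longleftrightarrow> is_leaf V E x"
proof -
  have "is_leaf V F (f x) \<longleftrightarrow> (\<exists>z\<in>f ` V. F (f x) z \<and> (\<forall>w\<in>f ` V. F (f x) w \<longrightarrow> w = z))"
    by (simp only: is_leaf_def image_eq)
  also have "\<dots> \<longleftrightarrow> is_leaf V E x"
    using assms by (simp add: is_leaf_def edge_iff inj_iff)
  finally show ?thesis .
qed

lemma leaves_iso: "leaves V F = f ` leaves V E"
proof -
  have "leaves V F = {y \<in> f ` V. is_leaf V F y}"
    by (simp only: leaves_def image_eq)
  also have "\<dots> = f ` leaves V E"
    by (auto simp: leaves_def is_leaf_iso_iff)
  finally show ?thesis .
qed

lemma has_nonadjacent_nontwins_iso_iff: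
  "has_nonadjacent_nontwins V F \<longleftrightarrow> has_nonadjacent_nontwins V E"
proof -
  have "has_nonadjacent_nontwins V F \<longleftrightarrow> (\<exists>x\<in>f ` V. \<exists>y\<in>f ` V. x \<noteq> y \<and> \<not> F x y \<and>
     \<not> is_leaf V F x \<and> \<not> is_leaf V F y \<and> (\<exists>w\<in>f ` V. F x w \<noteq> F y w))"
    by (simp only: has_nonadjacent_nontwins_def image_eq)
  also have "\<dots> \<longleftrightarrow> has_nonadjacent_nontwins V E"
    by (simp add: has_nonadjacent_nontwins_def edge_iff inj_iff is_leaf_iso_iff)
  finally show ?thesis .
qed

end

lemma iso_signature_eq_if_graph_iso:
  assumes "graph_iso V E F"
  shows "iso_signature V E = iso_signature V F"
proof -
  obtain f where f: "bij_betw f V V" "\<forall>x\<in>V. \<forall>y\<in>V. E x y \<longleftrightarrow> F (f x) (f y)"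
    using assms unfolding graph_iso_def by blast
  have "inj_on f (leaves V E)"
    using f(1) by (rule inj_on_subset[OF bij_betw_imp_inj_on]) (simp add: leaves_def)
  then show ?thesis
    by (simp add: iso_signature_def has_nonadjacent_nontwins_iso_iff[OF f]
        leaves_iso[OF f] card_image)
qed

lemma card_quotient_eq_card_image:
  assumes "\<forall>x\<in>S. \<forall>y\<in>S. R x y \<longleftrightarrow> g x = g y"
  shows "card (S // {(x, y). x \<in> S \<and> y \<in> S \<and> R x y}) = card (g ` S)"
proof -
  let ?r = "{(x, y). x \<in> S \<and> y \<in> S \<and> R x y}"
  let ?fibre = "\<lambda>v. {y \<in> S. g y = v}"
  have "S // ?r = (\<lambda>x. ?r `` {x}) ` S"
    unfolding quotient_def by auto
  also have "\<dots> = (\<lambda>x. ?fibre (g x)) ` S"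
    using assms by (intro image_cong) auto
  also have "\<dots> = ?fibre ` g ` S"
    by (simp add: image_image)
  finally have "S // ?r = ?fibre ` g ` S" .
  moreover have "inj_on ?fibre (g ` S)"
    by (rule inj_onI) blast
  ultimately show ?thesis
    by (simp add: card_image)
qed

section \<open>Normal forms of the orbit\<close>

datatype part_kind = Indep | Clique | Star

text \<open>The graph on the parts is complete for \<^term>\<open>None\<close> and a star centred at part
  \<open>i\<close> for \<^term>\<open>Some i\<close>.\<close>

definition quot_adj :: "nat option \<Rightarrow> nat \<Rightarrow> nat \<Rightarrow> bool" where
  "quot_adj q j l \<longleftrightarrow> j \<noteq> l \<and> (case q of None \<Rightarrow> True | Some i \<Rightarrow> j = i \<or> l = i)"

definition quot_lc :: "nat option \<Rightarrow> nat \<Rightarrow> nat option" where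
  "quot_lc q i = (case q of None \<Rightarrow> Some i | Some i0 \<Rightarrow> if i = i0 then None else Some i0)"

fun kind_toggle :: "part_kind \<Rightarrow> part_kind" where
  "kind_toggle Indep = Clique" | "kind_toggle Clique = Indep" | "kind_toggle Star = Star"

fun kind_lc_own :: "part_kind \<Rightarrow> part_kind" where
  "kind_lc_own Indep = Indep" | "kind_lc_own Clique = Star" | "kind_lc_own Star = Clique"

definition lc_kinds :: "nat option \<Rightarrow> (nat \<Rightarrow> part_kind) \<Rightarrow> nat \<Rightarrow> nat \<Rightarrow> part_kind" where
  "lc_kinds q t i j =
     (if j = i then kind_lc_own (t i) else if quot_adj q i j then kind_toggle (t j) else t j)"

text \<open>A part \<open>i\<close> of kind \<^term>\<open>Star\<close> is a star with centre \<open>(i, c i)\<close>, and only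
  this centre has neighbours in other parts; for the other kinds \<open>c i\<close> is irrelevant.\<close>

definition nf_graph :: "nat \<Rightarrow> nat \<Rightarrow> nat option \<Rightarrow> (nat \<Rightarrow> part_kind) \<Rightarrow> (nat \<Rightarrow> nat)
    \<Rightarrow> nat \<times> nat \<Rightarrow> nat \<times> nat \<Rightarrow> bool" where
  "nf_graph k n q t c x y \<longleftrightarrow> x \<in> kpart_verts k n \<and> y \<in> kpart_verts k n \<and> x \<noteq> y \<and>
     (if fst x = fst y
      then t (fst x) = Clique \<or> t (fst x) = Star \<and> (snd x = c (fst x) \<or> snd y = c (fst y))
      else quot_adj q (fst x) (fst y) \<and> (t (fst x) = Star \<longrightarrow> snd x = c (fst x))
        \<and> (t (fst y) = Star \<longrightarrow> snd y = c (fst y)))"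

definition star_parts :: "nat \<Rightarrow> (nat \<Rightarrow> part_kind) \<Rightarrow> nat set" where
  "star_parts k t = {j. j < k \<and> t j = Star}"

definition admissible :: "nat \<Rightarrow> nat option \<Rightarrow> (nat \<Rightarrow> part_kind) \<Rightarrow> bool" where
  "admissible k q t \<longleftrightarrow> (case q of
      None \<Rightarrow> (\<forall>j<k. t j \<noteq> Clique) \<and> even (card (star_parts k t))
    | Some i \<Rightarrow> i < k \<and> t i = (if even (card (star_parts k t)) then Indep else Clique)
        \<and> (\<forall>j<k. j \<noteq> i \<longrightarrow> t j \<noteq> Indep))"

lemma mem_kpart_verts [simp]: "(i, a) \<in> kpart_verts k n \<longleftrightarrow> i < k \<and> a < n"
  by (simp add: kpart_verts_def)

lemma finite_kpart_verts: "finite (kpart_verts k n)"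
  by (simp add: kpart_verts_def)

lemma finite_star_parts [simp]: "finite (star_parts k t)"
  by (simp add: star_parts_def)

lemma quot_adj_sym: "quot_adj q j l = quot_adj q l j"
  by (auto simp: quot_adj_def split: option.splits)

lemma quot_adj_quot_lc:
  "quot_adj (quot_lc q i) i j = quot_adj q i j"
  "quot_adj (quot_lc q i) j i = quot_adj q j i"
  "j \<noteq> l \<Longrightarrow> j \<noteq> i \<Longrightarrow> l \<noteq> i \<Longrightarrow>
     quot_adj (quot_lc q i) j l = (quot_adj q j l \<noteq> (quot_adj q i j \<and> quot_adj q i l))"
  by (auto simp: quot_adj_def quot_lc_def split: option.splits)

lemma complete_kpartite_eq_nf_graph:
  "complete_kpartite k n = nf_graph k n None (\<lambda>_. Indep) (\<lambda>_. 0)"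
  by (auto simp: complete_kpartite_def nf_graph_def quot_adj_def fun_eq_iff)

lemma admissible_complete: "admissible k None (\<lambda>_. Indep)"
  by (simp add: admissible_def star_parts_def)

section \<open>Local complementation of normal forms\<close>

lemma local_comp_eq_self:
  assumes "\<And>x y. E v x \<Longrightarrow> E v y \<Longrightarrow> x = y"
  shows "local_comp E v = E"
  using assms by (auto simp: local_comp_def fun_eq_iff)

lemma local_comp_nf_graph_leaf:
  assumes "t i = Star" "a \<noteq> c i"
  shows "local_comp (nf_graph k n q t c) (i, a) = nf_graph k n q t c"
proof (rule local_comp_eq_self)
  have "nf_graph k n q t c (i, a) z \<Longrightarrow> z = (i, c i)" for z
    using assms by (cases z) (auto simp: nf_graph_def split: if_splits)
  then show "x = y" if "nf_graph k n q t c (i, a) x" "nf_graph k n q t c (i, a) y" for x y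
    using that by blast
qed

lemma local_comp_nf_graph:
  assumes "\<not> (t i = Star \<and> a \<noteq> c i)" "i < k" "a < n"
  shows "local_comp (nf_graph k n q t c) (i, a)
    = nf_graph k n (quot_lc q i) (lc_kinds q t i) (c(i := a))"
proof (intro ext)
  fix x y :: "nat \<times> nat"
  obtain j b l d where xy: "x = (j, b)" "y = (l, d)"
    by fastforce
  show "local_comp (nf_graph k n q t c) (i, a) x y
      = nf_graph k n (quot_lc q i) (lc_kinds q t i) (c(i := a)) x y"
    unfolding xy local_comp_def nf_graph_def lc_kinds_def using assms
    by (cases "j = i"; cases "l = i"; cases "j = l"; cases "t i"; cases "t j"; cases "t l")
      (auto simp: quot_adj_quot_lc quot_adj_sym)
qed

lemma lc_kinds_own [simp]: "lc_kinds q t i i = kind_lc_own (t i)"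
  by (simp add: lc_kinds_def)

lemma lc_kinds_other:
  "j \<noteq> i \<Longrightarrow> lc_kinds q t i j = (if quot_adj q i j then kind_toggle (t j) else t j)"
  by (simp add: lc_kinds_def)

lemma star_parts_lc_kinds:
  assumes "i < k"
  shows "star_parts k (lc_kinds q t i) =
    (case t i of Indep \<Rightarrow> star_parts k t | Clique \<Rightarrow> insert i (star_parts k t)
       | Star \<Rightarrow> star_parts k t - {i})"
proof -
  have star: "lc_kinds q t i j = Star \<longleftrightarrow> (if j = i then t i = Clique else t j = Star)" for j
    by (cases "t i"; cases "t j") (auto simp: lc_kinds_other)
  show ?thesis
    using assms by (cases "t i") (auto simp: star_parts_def star)
qed

lemma even_card_star_parts_lc_kinds:
  assumes "i < k"
  shows "even (card (star_parts k (lc_kinds q t i))) \<longleftrightarrow> (t i = Indep \<longleftrightarrow> even (card (star_parts k t)))"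
proof -
  have "t i = Star \<longleftrightarrow> i \<in> star_parts k t"
    using assms by (simp add: star_parts_def)
  then show ?thesis
    using assms by (cases "t i") (auto simp: star_parts_lc_kinds card_gt_0_iff)
qed

lemma admissible_lc:
  assumes adm: "admissible k q t" and i: "i < k"
  shows "admissible k (quot_lc q i) (lc_kinds q t i)"
proof (cases q)
  case None
  then have no_clique: "t j \<noteq> Clique" if "j < k" for j
    using adm that by (simp add: admissible_def)
  then have "lc_kinds q t i j \<noteq> Indep" if "j < k" "j \<noteq> i" for j
    using that None by (cases "t j") (auto simp: quot_adj_def lc_kinds_other)
  moreover have "lc_kinds q t i i =
      (if even (card (star_parts k (lc_kinds q t i))) then Indep else Clique)"
    using adm None no_clique[OF i] even_card_star_parts_lc_kinds[OF i, of q t]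
    by (cases "t i") (auto simp: admissible_def)
  ultimately show ?thesis
    using None i by (simp add: admissible_def quot_lc_def)
next
  case (Some i0)
  then have i0: "i0 < k" "t i0 = (if even (card (star_parts k t)) then Indep else Clique)"
      "\<And>j. j < k \<Longrightarrow> j \<noteq> i0 \<Longrightarrow> t j \<noteq> Indep"
    using adm by (auto simp: admissible_def)
  show ?thesis
  proof (cases "i = i0")
    case True
    have "lc_kinds q t i j \<noteq> Clique" if "j < k" for j
      using that True Some i0 by (cases "j = i"; cases "t j")
        (auto simp: quot_adj_def lc_kinds_other split: if_split_asm)
    moreover have "even (card (star_parts k (lc_kinds q t i)))"
      using True i0(2) even_card_star_parts_lc_kinds[OF i, of q t] by auto
    ultimately show ?thesis
      using True Some by (simp add: admissible_def quot_lc_def)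
  next
    case False
    have "lc_kinds q t i j \<noteq> Indep" if "j < k" "j \<noteq> i0" for j
      using that False Some i0
      by (cases "j = i"; cases "t j") (auto simp: quot_adj_def lc_kinds_other)
    moreover have "lc_kinds q t i i0 =
        (if even (card (star_parts k (lc_kinds q t i))) then Indep else Clique)"
      using False Some i0 i even_card_star_parts_lc_kinds[OF i, of q t]
      by (auto simp: quot_adj_def lc_kinds_other)
    ultimately show ?thesis
      using False Some i0(1) by (simp add: admissible_def quot_lc_def)
  qed
qed

lemma nf_graph_lc_in_orbit:
  assumes "nf_graph k n q t c \<in> lc_orbit (kpart_verts k n) G" "i < k" "a < n"
    "\<not> (t i = Star \<and> a \<noteq> c i)"
  shows "nf_graph k n (quot_lc q i) (lc_kinds q t i) (c(i := a)) \<in> lc_orbit (kpart_verts k n) G"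
  using lc_orbit.step[OF assms(1), of "(i, a)"] assms(2-4) by (simp add: local_comp_nf_graph)

lemma lc_orbit_complete_kpartite_nf_graph:
  assumes "n > 0" "H \<in> lc_orbit (kpart_verts k n) (complete_kpartite k n)"
  shows "\<exists>q t c. H = nf_graph k n q t c \<and> admissible k q t \<and> (\<forall>j<k. c j < n)"
  using assms(2)
proof induction
  case base
  then show ?case
    using assms(1) admissible_complete complete_kpartite_eq_nf_graph by blast
next
  case (step H v)
  then obtain q t c where H: "H = nf_graph k n q t c" "admissible k q t" "\<forall>j<k. c j < n"
    by blast
  obtain i a where v: "v = (i, a)" "i < k" "a < n"
    using step.hyps(2) by (auto simp: kpart_verts_def)
  show ?case
  proof (cases "t i = Star \<and> a \<noteq> c i")
    case True
    then show ?thesis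
      using H v by (simp add: local_comp_nf_graph_leaf) blast
  next
    case False
    then have "local_comp H v = nf_graph k n (quot_lc q i) (lc_kinds q t i) (c(i := a))"
      using H v by (simp add: local_comp_nf_graph)
    moreover have "\<forall>j<k. (c(i := a)) j < n"
      using H v by simp
    ultimately show ?thesis
      using admissible_lc[OF H(2) v(2)] by blast
  qed
qed

lemma two_other_parts:
  fixes k i :: nat
  assumes "k \<ge> 3" "i < k"
  obtains j l where "j < k" "l < k" "j \<noteq> l" "j \<noteq> i" "l \<noteq> i"
  using assms by (intro that[of "if i = 0 then 1 else 0" "if i = 2 then 1 else 2"]) auto

lemma other_index:
  fixes n a :: nat
  assumes "n \<ge> 2" "a < n"
  obtains b where "b < n" "b \<noteq> a"
  using assms by (intro that[of "if a = 0 then 1 else 0"]) auto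

lemma admissible_quot_neighbour:
  assumes "admissible k q t" "k \<ge> 3" "i < k"
  obtains j where "j < k" "quot_adj q i j"
proof (cases "q = None \<or> q = Some i")
  case True
  obtain j l where "j < k" "l < k" "j \<noteq> l" "j \<noteq> i" "l \<noteq> i"
    using two_other_parts[OF assms(2,3)] .
  then show ?thesis
    using True that by (auto simp: quot_adj_def)
next
  case False
  then obtain i0 where "q = Some i0" "i0 \<noteq> i"
    by auto
  then show ?thesis
    using assms(1) that[of i0] by (auto simp: quot_adj_def admissible_def)
qed

context
  fixes k n :: nat and q :: "nat option" and t :: "nat \<Rightarrow> part_kind" and c :: "nat \<Rightarrow> nat"
  assumes adm: "admissible k q t" and k: "k \<ge> 3" and n: "n \<ge> 2"
    and c: "\<forall>j<k. c j < n"
begin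

lemma is_leaf_nf_graph_iff:
  assumes "i < k" "a < n"
  shows "is_leaf (kpart_verts k n) (nf_graph k n q t c) (i, a) \<longleftrightarrow> t i = Star \<and> a \<noteq> c i"
proof
  assume leaf: "is_leaf (kpart_verts k n) (nf_graph k n q t c) (i, a)"
  show "t i = Star \<and> a \<noteq> c i"
  proof (rule ccontr)
    assume centre: "\<not> (t i = Star \<and> a \<noteq> c i)"
    show False
    proof (cases "t i = Indep")
      case True
      then have "q = None \<or> q = Some i"
        using adm assms by (cases q) (auto simp: admissible_def)
      moreover obtain j l where "j < k" "l < k" "j \<noteq> l" "j \<noteq> i" "l \<noteq> i"
        using two_other_parts[OF k assms(1)] .
      ultimately show False
        using leaf True assms c
          not_leaf_if_two_neighbours[of "(j, c j)" "kpart_verts k n" "(l, c l)" _ "(i, a)"]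
        by (auto simp: nf_graph_def quot_adj_def)
    next
      case False
      obtain j where "j < k" "quot_adj q i j"
        using admissible_quot_neighbour[OF adm k assms(1)] .
      moreover obtain b where "b < n" "b \<noteq> a"
        using other_index[OF n assms(2)] .
      ultimately show False
        using leaf False centre assms c
          not_leaf_if_two_neighbours[of "(j, c j)" "kpart_verts k n" "(i, b)" _ "(i, a)"]
        by (cases "t i") (auto simp: nf_graph_def quot_adj_def)
    qed
  qed
next
  assume star: "t i = Star \<and> a \<noteq> c i"
  have "nf_graph k n q t c (i, a) w \<Longrightarrow> w = (i, c i)" for w
    using star by (cases w) (auto simp: nf_graph_def split: if_splits)
  moreover have "nf_graph k n q t c (i, a) (i, c i)"
    using star assms c by (auto simp: nf_graph_def)
  ultimately show "is_leaf (kpart_verts k n) (nf_graph k n q t c) (i, a)"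
    using assms c unfolding is_leaf_def by (metis mem_kpart_verts)
qed

lemma card_leaves_nf_graph:
  "card (leaves (kpart_verts k n) (nf_graph k n q t c)) = card (star_parts k t) * (n - 1)"
proof -
  have "x \<in> leaves (kpart_verts k n) (nf_graph k n q t c)
      \<longleftrightarrow> x \<in> Sigma (star_parts k t) (\<lambda>j. {0..<n} - {c j})" for x
    using c by (cases x) (auto simp: leaves_def is_leaf_nf_graph_iff star_parts_def)
  then have "leaves (kpart_verts k n) (nf_graph k n q t c)
      = Sigma (star_parts k t) (\<lambda>j. {0..<n} - {c j})"
    by blast
  also have "card \<dots> = (\<Sum>j\<in>star_parts k t. n - 1)"
    using c by (simp add: star_parts_def)
  finally show ?thesis
    by simp
qed

lemma has_nonadjacent_nontwins_nf_graph_iff: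
  "has_nonadjacent_nontwins (kpart_verts k n) (nf_graph k n q t c) \<longleftrightarrow> q \<noteq> None"
proof
  let ?E = "nf_graph k n q t c"
  assume "has_nonadjacent_nontwins (kpart_verts k n) ?E"
  then obtain x y w where xy: "x \<in> kpart_verts k n" "y \<in> kpart_verts k n" "x \<noteq> y"
    and nonadj: "\<not> ?E x y"
    and nonleaf: "\<not> is_leaf (kpart_verts k n) ?E x" "\<not> is_leaf (kpart_verts k n) ?E y"
    and nontwin: "?E x w \<noteq> ?E y w"
    unfolding has_nonadjacent_nontwins_def by blast
  obtain i a j b where ij: "x = (i, a)" "y = (j, b)"
    by fastforce
  have ranges: "i < k" "a < n" "j < k" "b < n"
    using xy ij by auto
  have centres: "\<not> (t i = Star \<and> a \<noteq> c i)" "\<not> (t j = Star \<and> b \<noteq> c j)"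
    using nonleaf ij ranges by (simp_all add: is_leaf_nf_graph_iff)
  show "q \<noteq> None"
  proof
    assume None: "q = None"
    have "i = j"
    proof (rule ccontr)
      assume "i \<noteq> j"
      then have "?E x y"
        using ij ranges centres None by (auto simp: nf_graph_def quot_adj_def)
      with nonadj show False ..
    qed
    moreover have "t i \<noteq> Clique"
      using adm None ranges by (simp add: admissible_def)
    ultimately have "t i = Indep"
      using centres xy(3) ij by (cases "t i") auto
    then have "?E x w = ?E y w"
      using ij \<open>i = j\<close> ranges by (cases w) (auto simp: nf_graph_def)
    with nontwin show False ..
  qed
next
  let ?E = "nf_graph k n q t c"
  assume "q \<noteq> None"
  then obtain i where q: "q = Some i"
    by blast
  then have i: "i < k" "\<forall>j<k. j \<noteq> i \<longrightarrow> t j \<noteq> Indep"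
    using adm by (auto simp: admissible_def)
  obtain j l where jl: "j < k" "l < k" "j \<noteq> l" "j \<noteq> i" "l \<noteq> i"
    using two_other_parts[OF k i(1)] .
  obtain b where b: "b < n" "b \<noteq> c j"
    using other_index[OF n] c jl by blast
  have "(j, c j) \<in> kpart_verts k n" "(l, c l) \<in> kpart_verts k n" "(j, b) \<in> kpart_verts k n"
    using c jl b by simp_all
  moreover have "\<not> is_leaf (kpart_verts k n) ?E (j, c j)" "\<not> is_leaf (kpart_verts k n) ?E (l, c l)"
    using c jl by (simp_all add: is_leaf_nf_graph_iff)
  moreover have "\<not> ?E (j, c j) (l, c l)" "\<not> ?E (l, c l) (j, b)"
    using jl q by (simp_all add: nf_graph_def quot_adj_def)
  moreover have "?E (j, c j) (j, b)"
    using i jl b c by (cases "t j") (auto simp: nf_graph_def)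
  ultimately show "has_nonadjacent_nontwins (kpart_verts k n) ?E"
    unfolding has_nonadjacent_nontwins_def using jl(3) by blast
qed

lemma iso_signature_nf_graph:
  "iso_signature (kpart_verts k n) (nf_graph k n q t c)
    = (q \<noteq> None, card (star_parts k t) * (n - 1))"
  by (simp add: iso_signature_def has_nonadjacent_nontwins_nf_graph_iff card_leaves_nf_graph)

end

lemma nf_graph_iso:
  assumes p: "p permutes {0..<k}" and kinds: "\<forall>j<k. t' (p j) = t j"
    and quot: "\<forall>j<k. \<forall>l<k. quot_adj q' (p j) (p l) \<longleftrightarrow> quot_adj q j l"
    and c: "\<forall>j<k. c j < n" and c': "\<forall>j<k. c' j < n"
  shows "graph_iso (kpart_verts k n) (nf_graph k n q t c) (nf_graph k n q' t' c')"
proof -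
  define f where "f x = (p (fst x), transpose (c (fst x)) (c' (p (fst x))) (snd x))" for x
  have p_lt: "p j < k" if "j < k" for j
    using permutes_in_image[OF p] that by simp
  have p_eq: "p j = p l \<longleftrightarrow> j = l" for j l
    using permutes_inj[OF p] by (auto dest: injD)
  have f_in: "f x \<in> kpart_verts k n" if "x \<in> kpart_verts k n" for x
    using that p_lt c c' by (auto simp: f_def kpart_verts_def transpose_def)
  have f_inj: "inj_on f (kpart_verts k n)"
    by (rule inj_onI) (auto simp: f_def kpart_verts_def p_eq dest: transpose_eq_imp_eq)
  have "bij_betw f (kpart_verts k n) (kpart_verts k n)"
    using f_inj f_in finite_kpart_verts
    by (simp add: bij_betw_def endo_inj_surj image_subsetI)
  moreover have "nf_graph k n q t c x y \<longleftrightarrow> nf_graph k n q' t' c' (f x) (f y)"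
    if "x \<in> kpart_verts k n" "y \<in> kpart_verts k n" for x y
    using that f_in[OF that(1)] f_in[OF that(2)] kinds quot p_eq
    by (cases x; cases y) (auto simp: nf_graph_def f_def transpose_eq_iff kpart_verts_def)
  ultimately show ?thesis
    unfolding graph_iso_def by blast
qed

definition part_label :: "nat option \<Rightarrow> (nat \<Rightarrow> part_kind) \<Rightarrow> nat \<Rightarrow> bool \<times> part_kind" where
  "part_label q t j = (q = Some j, t j)"

lemma card_part_label_centre:
  assumes "admissible k q t"
  shows "card {j \<in> {0..<k}. part_label q t j = (True, \<kappa>)} =
    (if q \<noteq> None \<and> \<kappa> = (if even (card (star_parts k t)) then Indep else Clique) then 1 else 0)"
proof (cases q)
  case (Some i)
  then have i: "i < k" "t i = (if even (card (star_parts k t)) then Indep else Clique)"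
    using assms by (simp_all add: admissible_def)
  then have "{j \<in> {0..<k}. part_label q t j = (True, \<kappa>)} = (if t i = \<kappa> then {i} else {})"
    using Some by (auto simp: part_label_def)
  then show ?thesis
    using Some i(2) by simp
qed (simp add: part_label_def)

lemma card_part_label_Star:
  assumes "admissible k q t"
  shows "card {j \<in> {0..<k}. part_label q t j = (False, Star)} = card (star_parts k t)"
proof -
  have "t i \<noteq> Star" if "q = Some i" for i
    using assms that by (simp add: admissible_def)
  then have "{j \<in> {0..<k}. part_label q t j = (False, Star)} = star_parts k t"
    by (auto simp: part_label_def star_parts_def)
  then show ?thesis
    by simp
qed

lemma card_part_label_Indep:
  assumes "admissible k q t"
  shows "card {j \<in> {0..<k}. part_label q t j = (False, Indep)} =
    (if q = None then k - card (star_parts k t) else 0)"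
proof (cases q)
  case None
  then have "t j \<noteq> Clique" if "j < k" for j
    using assms that by (simp add: admissible_def)
  then have "{j \<in> {0..<k}. part_label q t j = (False, Indep)} = {0..<k} - star_parts k t"
    using None by (auto simp: part_label_def star_parts_def) (metis part_kind.exhaust)
  moreover have "star_parts k t \<subseteq> {0..<k}"
    by (auto simp: star_parts_def)
  ultimately show ?thesis
    using None by (simp add: card_Diff_subset)
next
  case (Some i)
  then have "{j \<in> {0..<k}. part_label q t j = (False, Indep)} = {}"
    using assms by (auto simp: admissible_def part_label_def)
  then show ?thesis
    using Some by simp
qed

lemma card_part_label_Clique:
  assumes "admissible k q t"
  shows "card {j \<in> {0..<k}. part_label q t j = (False, Clique)} =
    (if q = None then 0 else k - 1 - card (star_parts k t))"
proof (cases q)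
  case None
  then have "{j \<in> {0..<k}. part_label q t j = (False, Clique)} = {}"
    using assms by (auto simp: admissible_def part_label_def)
  then show ?thesis
    using None by simp
next
  case (Some i)
  then have i: "i < k" "t i \<noteq> Star" "\<forall>j<k. j \<noteq> i \<longrightarrow> t j \<noteq> Indep"
    using assms by (auto simp: admissible_def split: if_split_asm)
  then have "{j \<in> {0..<k}. part_label q t j = (False, Clique)} = ({0..<k} - {i}) - star_parts k t"
    using Some by (auto simp: part_label_def star_parts_def) (metis part_kind.exhaust)
  moreover have "star_parts k t \<subseteq> {0..<k} - {i}"
    using i(2) by (auto simp: star_parts_def)
  ultimately show ?thesis
    using i(1) Some by (simp add: card_Diff_subset)
qed

lemma card_part_label_eq:
  assumes adm: "admissible k q t" and adm': "admissible k q' t'"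
    and shape: "(q = None) = (q' = None)"
    and stars: "card (star_parts k t) = card (star_parts k t')"
  shows "card {j \<in> {0..<k}. part_label q t j = v} = card {j \<in> {0..<k}. part_label q' t' j = v}"
proof -
  obtain b \<kappa> where v: "v = (b, \<kappa>)"
    by fastforce
  show ?thesis
    unfolding v using shape stars
      card_part_label_centre[OF adm, of \<kappa>] card_part_label_centre[OF adm', of \<kappa>]
      card_part_label_Star[OF adm] card_part_label_Star[OF adm']
      card_part_label_Indep[OF adm] card_part_label_Indep[OF adm']
      card_part_label_Clique[OF adm] card_part_label_Clique[OF adm']
    by (cases b; cases \<kappa>) simp_all
qed

lemma nf_graph_iso_if_same_data:
  assumes adm: "admissible k q t" and adm': "admissible k q' t'"
    and c: "\<forall>j<k. c j < n" and c': "\<forall>j<k. c' j < n"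
    and shape: "(q = None) = (q' = None)"
    and stars: "card (star_parts k t) = card (star_parts k t')"
  shows "graph_iso (kpart_verts k n) (nf_graph k n q t c) (nf_graph k n q' t' c')"
proof -
  have "image_mset (part_label q t) (mset_set {0..<k})
      = image_mset (part_label q' t') (mset_set {0..<k})"
    by (rule multiset_eqI) (simp only: count_image_mset_eq_card_vimage[OF finite_atLeastLessThan]
        card_part_label_eq[OF adm adm' shape stars])
  then obtain p where p: "p permutes {0..<k}"
    and labels: "\<forall>j\<in>{0..<k}. part_label q t j = part_label q' t' (p j)"
    by (rule image_mset_eq_implies_permutes[OF finite_atLeastLessThan])
  have centre: "q' = Some (p j) \<longleftrightarrow> q = Some j" if "j < k" for j
    using labels that by (auto simp: part_label_def)
  have p_eq: "p j = p l \<longleftrightarrow> j = l" for j l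
    using permutes_inj[OF p] by (auto dest: injD)
  have "quot_adj q' (p j) (p l) \<longleftrightarrow> quot_adj q j l" if "j < k" "l < k" for j l
    using that shape centre[of j] centre[of l] p_eq[of j l]
    by (cases q; cases q') (auto simp: quot_adj_def)
  then show ?thesis
    using nf_graph_iso[OF p _ _ c c'] labels by (auto simp: part_label_def)
qed

section \<open>Reachable normal forms\<close>

definition admissible_data :: "nat \<Rightarrow> (bool \<times> nat) set" where
  "admissible_data k = {False} \<times> {m. m \<le> k \<and> even m} \<union> {True} \<times> {..<k}"

lemma admissible_in_admissible_data:
  assumes "admissible k q t"
  shows "(q \<noteq> None, card (star_parts k t)) \<in> admissible_data k"
proof (cases q)
  case None
  have "card (star_parts k t) \<le> card {0..<k}"
    by (rule card_mono) (auto simp: star_parts_def)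
  then show ?thesis
    using assms None by (simp add: admissible_def admissible_data_def)
next
  case (Some i)
  then have i: "i < k" "t i \<noteq> Star"
    using assms by (auto simp: admissible_def)
  then have "card (star_parts k t) \<le> card ({0..<k} - {i})"
    by (intro card_mono) (auto simp: star_parts_def)
  then show ?thesis
    using i Some by (simp add: admissible_data_def)
qed

lemma card_even_atMost: "card {m::nat. m \<le> k \<and> even m} = k div 2 + 1"
proof -
  have "{m::nat. m \<le> k \<and> even m} = (\<lambda>i. 2 * i) ` {..k div 2}"
  proof (intro set_eqI iffI)
    fix m assume "m \<in> {m. m \<le> k \<and> even m}"
    then show "m \<in> (\<lambda>i. 2 * i) ` {..k div 2}"
      by (auto intro!: image_eqI[of _ _ "m div 2"])
  qed auto
  moreover have "inj_on (\<lambda>i::nat. 2 * i) {..k div 2}"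
    by (rule inj_onI) simp
  ultimately show ?thesis
    by (simp add: card_image)
qed

lemma card_admissible_data: "card (admissible_data k) = k div 2 + 1 + k"
  unfolding admissible_data_def
  by (subst card_Un_disjoint) (auto simp: card_cartesian_product_singleton card_even_atMost)

text \<open>Starting from \<^term>\<open>complete_kpartite k n\<close>, complementing at \<open>(0, 0)\<close> and
  then at \<open>(1, 0), \<dots>, (s, 0)\<close> turns parts \<open>1, \<dots>, s\<close> into stars; for odd \<open>s\<close>, one
  more complementation at \<open>(0, 0)\<close> gives the complete part graph with \<open>s + 1\<close> star parts.\<close>

definition star_witness_kinds :: "nat \<Rightarrow> nat \<Rightarrow> part_kind" where
  "star_witness_kinds s j =
     (if j = 0 then (if even s then Indep else Clique) else if j \<le> s then Star else Clique)"

lemma star_parts_star_witness_kinds: "s < k \<Longrightarrow> star_parts k (star_witness_kinds s) = {1..s}"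
  by (auto simp: star_parts_def star_witness_kinds_def)

lemma admissible_star_witness_kinds: "s < k \<Longrightarrow> admissible k (Some 0) (star_witness_kinds s)"
  by (auto simp: admissible_def star_witness_kinds_def star_parts_star_witness_kinds)

lemma star_witness_in_lc_orbit:
  assumes "s < k" "n > 0"
  shows "nf_graph k n (Some 0) (star_witness_kinds s) (\<lambda>_. 0)
    \<in> lc_orbit (kpart_verts k n) (complete_kpartite k n)"
  using assms(1)
proof (induction s)
  case 0
  have "nf_graph k n (quot_lc None 0) (lc_kinds None (\<lambda>_. Indep) 0) ((\<lambda>_. 0)(0 := 0))
      \<in> lc_orbit (kpart_verts k n) (complete_kpartite k n)"
    using 0 assms(2)
    by (intro nf_graph_lc_in_orbit)
      (simp_all add: complete_kpartite_eq_nf_graph[symmetric] lc_orbit.base)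
  moreover have "quot_lc None 0 = Some 0" "lc_kinds None (\<lambda>_. Indep) 0 = star_witness_kinds 0"
    "(\<lambda>_::nat. 0::nat)(0 := 0) = (\<lambda>_. 0)"
    by (auto simp: quot_lc_def lc_kinds_def star_witness_kinds_def quot_adj_def)
  ultimately show ?case
    by simp
next
  case (Suc s)
  have "nf_graph k n (quot_lc (Some 0) (Suc s)) (lc_kinds (Some 0) (star_witness_kinds s) (Suc s))
      ((\<lambda>_. 0)(Suc s := 0)) \<in> lc_orbit (kpart_verts k n) (complete_kpartite k n)"
    using Suc assms(2) by (intro nf_graph_lc_in_orbit) simp_all
  moreover have "quot_lc (Some 0) (Suc s) = Some 0"
    "lc_kinds (Some 0) (star_witness_kinds s) (Suc s) = star_witness_kinds (Suc s)"
    "(\<lambda>_::nat. 0::nat)(Suc s := 0) = (\<lambda>_. 0)"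
    by (auto simp: quot_lc_def lc_kinds_def star_witness_kinds_def quot_adj_def)
  ultimately show ?case
    by simp
qed

lemma admissible_data_in_lc_orbit:
  assumes "(b, s) \<in> admissible_data k" "n > 0"
  obtains q t where "admissible k q t" "(q \<noteq> None) = b" "card (star_parts k t) = s"
    "nf_graph k n q t (\<lambda>_. 0) \<in> lc_orbit (kpart_verts k n) (complete_kpartite k n)"
proof -
  consider "b" "s < k" | "\<not> b" "s = 0" | s' where "\<not> b" "s = Suc s'" "s' < k" "odd s'"
    using assms(1) by (cases s) (auto simp: admissible_data_def)
  then show ?thesis
  proof cases
    case 1
    show ?thesis
      using 1 assms(2) admissible_star_witness_kinds star_witness_in_lc_orbit
        star_parts_star_witness_kinds
      by (intro that[of "Some 0" "star_witness_kinds s"]) simp_all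
  next
    case 2
    show ?thesis
      using 2 admissible_complete lc_orbit.base
      by (intro that[of None "\<lambda>_. Indep"])
        (simp_all add: star_parts_def complete_kpartite_eq_nf_graph[symmetric])
  next
    case 3
    let ?t = "star_witness_kinds s'"
    have t0: "?t 0 = Clique"
      using 3 by (simp add: star_witness_kinds_def)
    have "nf_graph k n (quot_lc (Some 0) 0) (lc_kinds (Some 0) ?t 0) ((\<lambda>_. 0)(0 := 0))
        \<in> lc_orbit (kpart_verts k n) (complete_kpartite k n)"
      using 3 t0 assms(2) star_witness_in_lc_orbit by (intro nf_graph_lc_in_orbit) auto
    moreover have "admissible k (quot_lc (Some 0) 0) (lc_kinds (Some 0) ?t 0)"
      using 3 by (intro admissible_lc admissible_star_witness_kinds) auto
    moreover have "card (star_parts k (lc_kinds (Some 0) ?t 0)) = s"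
      using 3 t0 by (simp add: star_parts_lc_kinds star_parts_star_witness_kinds)
    moreover have "quot_lc (Some 0) 0 = None" "(\<lambda>_::nat. 0::nat)(0 := 0) = (\<lambda>_. 0)"
      by (auto simp: quot_lc_def)
    ultimately show ?thesis
      using 3 by (intro that) simp_all
  qed
qed

context
  fixes k n :: nat
  assumes k: "k \<ge> 3" and n: "n \<ge> 2"
begin

private lemma n_pos: "n > 0"
  using n by simp

lemma graph_iso_iff_iso_signature_lc_orbit:
  assumes "E \<in> lc_orbit (kpart_verts k n) (complete_kpartite k n)"
    and "F \<in> lc_orbit (kpart_verts k n) (complete_kpartite k n)"
  shows "graph_iso (kpart_verts k n) E F \<longleftrightarrow>
    iso_signature (kpart_verts k n) E = iso_signature (kpart_verts k n) F"
proof
  assume same: "iso_signature (kpart_verts k n) E = iso_signature (kpart_verts k n) F"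
  obtain q t c where E: "E = nf_graph k n q t c" "admissible k q t" "\<forall>j<k. c j < n"
    using lc_orbit_complete_kpartite_nf_graph[OF n_pos assms(1)] by blast
  obtain q' t' c' where F: "F = nf_graph k n q' t' c'" "admissible k q' t'" "\<forall>j<k. c' j < n"
    using lc_orbit_complete_kpartite_nf_graph[OF n_pos assms(2)] by blast
  have "(q = None) = (q' = None)" "card (star_parts k t) = card (star_parts k t')"
    using same n by (auto simp: E F iso_signature_nf_graph[OF E(2) k n E(3)]
        iso_signature_nf_graph[OF F(2) k n F(3)])
  then show "graph_iso (kpart_verts k n) E F"
    unfolding E(1) F(1) by (rule nf_graph_iso_if_same_data[OF E(2) F(2) E(3) F(3)])
qed (rule iso_signature_eq_if_graph_iso)

lemma iso_signature_lc_orbit: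
  "iso_signature (kpart_verts k n) ` lc_orbit (kpart_verts k n) (complete_kpartite k n)
    = (\<lambda>(b, s). (b, s * (n - 1))) ` admissible_data k"
proof (intro equalityI subsetI)
  fix x assume "x \<in> iso_signature (kpart_verts k n) ` lc_orbit (kpart_verts k n) (complete_kpartite k n)"
  then obtain E where E: "E \<in> lc_orbit (kpart_verts k n) (complete_kpartite k n)"
    and x: "x = iso_signature (kpart_verts k n) E"
    by blast
  obtain q t c where "E = nf_graph k n q t c" and adm: "admissible k q t" and c: "\<forall>j<k. c j < n"
    using lc_orbit_complete_kpartite_nf_graph[OF n_pos E] by blast
  have "x = (\<lambda>(b, s). (b, s * (n - 1))) (q \<noteq> None, card (star_parts k t))"
    unfolding x \<open>E = nf_graph k n q t c\<close> by (simp add: iso_signature_nf_graph[OF adm k n c])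
  then show "x \<in> (\<lambda>(b, s). (b, s * (n - 1))) ` admissible_data k"
    using admissible_in_admissible_data[OF adm] by (rule image_eqI)
next
  fix x assume "x \<in> (\<lambda>(b, s). (b, s * (n - 1))) ` admissible_data k"
  then obtain b s where x: "x = (b, s * (n - 1))" and bs: "(b, s) \<in> admissible_data k"
    by auto
  obtain q t where adm: "admissible k q t" and data: "(q \<noteq> None) = b" "card (star_parts k t) = s"
    and orbit: "nf_graph k n q t (\<lambda>_. 0) \<in> lc_orbit (kpart_verts k n) (complete_kpartite k n)"
    by (rule admissible_data_in_lc_orbit[OF bs n_pos])
  have "x = iso_signature (kpart_verts k n) (nf_graph k n q t (\<lambda>_. 0))"
    using n data by (auto simp: x iso_signature_nf_graph[OF adm k n])
  then show "x \<in> iso_signature (kpart_verts k n) ` lc_orbit (kpart_verts k n) (complete_kpartite k n)"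
    using orbit by (rule image_eqI)
qed

end

theorem theorem15:
  fixes k n :: nat
  assumes "k \<ge> 3" and "n \<ge> 2"
  shows "num_iso_classes (kpart_verts k n)
           (lc_orbit (kpart_verts k n) (complete_kpartite k n)) = k div 2 + k + 1"
proof -
  let ?V = "kpart_verts k n"
  let ?O = "lc_orbit ?V (complete_kpartite k n)"
  have "num_iso_classes ?V ?O = card (iso_signature ?V ` ?O)"
    unfolding num_iso_classes_def
    using graph_iso_iff_iso_signature_lc_orbit[OF assms]
    by (intro card_quotient_eq_card_image) blast
  also have "\<dots> = card ((\<lambda>(b, s). (b, s * (n - 1))) ` admissible_data k)"
    by (simp only: iso_signature_lc_orbit[OF assms])
  also have "\<dots> = card (admissible_data k)"
    using assms(2) by (intro card_image inj_onI) auto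
  finally show ?thesis
    by (simp add: card_admissible_data)
qed

end
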